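(* Let $(V,\sim)$ be a finite graph with side data $\mathrm{left}(\cdot),\mathrm{right}(\cdot)$ as in the context, and assume $(V,\sim)$ admits a conformal model. Let $Q\subseteq V$ be a prime node of the modular decomposition tree of $(V,\sim)$ with children $M_1,\ldots,M_n$, and let $U \subseteq Q$ contain exactly one vertex from each $M_j$. Fix $i \in \{1,\ldots,n\}$ and $v,w \in M_i$. (1) If $M_i$ is parallel (i.e. $(M_i,\sim)$ is disconnected), then the following are equivalent: (a) for every $u \in Q \setminus M_i$ with $u \parallel M_i$, either $\{v,w\} \subseteq \mathrm{left}(u)$ or $\{v,w\} \subseteq \mathrm{right}(u)$; (b) for every $u \in U \setminus M_i$ with $u \parallel M_i$, either $\{v,w\} \subseteq \mathrm{left}(u)$ or $\{v,w\} \subseteq \mathrm{right}(u)$. (2) If $M_i$ is serial (i.e. the complement of $(M_i,\sim)$ is disconnected), then the following are equivalent: (a) $\{\mathrm{left}(v) \cap (Q\setminus M_i), \mathrm{right}(v) \cap (Q \setminus M_i)\} = \{\mathrm{left}(w) \cap (Q\setminus M_i), \mathrm{right}(w) \cap (Q \setminus M_i)\}$; (b) $\{\mathrm{left}(v) \cap (U\setminus M_i), \mathrm{right}(v) \cap (U \setminus M_i)\} = \{\mathrm{left}(w) \cap (U\setminus M_i), \mathrm{right}(w) \cap (U \setminus M_i)\}$.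
   Context: Graph and side data. $(V,\sim)$ is a finite simple graph; $u \parallel v$ means $u \ne v$ and $u,v$ non-adjacent; for sets, $X\sim Y$ / $X \parallel Y$ means the relation holds for all pairs $x\in X$, $y\in Y$ (and $u \parallel M$ means $\{u\}\parallel M$). For every $u \in V$ we are given a partition of $\{v\in V: v \parallel u\}$ into $\mathrm{left}(u)$ and $\mathrm{right}(u)$. (In the paper $(V,\sim)$ is the overlap graph $G_{ov}$ of a circular-arc graph and the sides come from its arc model; conditions (a) in both items are the paper's definition of the $K$-relation on a parallel, resp. serial, child $M_i$.) Conformal models. For $X\subseteq V$, a conformal model of $(X,\sim)$ is a circular word (up to rotation) in which each letter $u^0,u^1$, $u \in X$, occurs exactly once, such that for distinct $u,v\in X$ the letters of $u$ and $v$ alternate iff $u \sim v$, and for $u \parallel v$ both letters of $v$ lie between $u^0$ and $u^1$ (reading cyclically forward from $u^0$) iff $v \in \mathrm{left}(u)$, and both lie between $u^1$ and $u^0$ iff $v \in \mathrm{right}(u)$. Modular decomposition. A module of $(X,\sim)$ is a set $M\subseteq X$ such that every vertex outside $M$ is adjacent to all or none of $M$; it is trivial if $|M|\le1$ or $M=X$; a graph is prime if it has only trivial modules. $Q$ is a prime node of the modular decomposition tree of $(V,\sim)$ whose children $M_1,\ldots,M_n$ are the maximal strong modules properly contained in $Q$, the quotient graph on one representative per child being prime. *)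

theory Defs
  imports Main
begin

definition nonadj :: "('a \<Rightarrow> 'a \<Rightarrow> bool) \<Rightarrow> 'a \<Rightarrow> 'a \<Rightarrow> bool" where
  "nonadj adj u v \<longleftrightarrow> u \<noteq> v \<and> \<not> adj u v"

definition simple_graph :: "'a set \<Rightarrow> ('a \<Rightarrow> 'a \<Rightarrow> bool) \<Rightarrow> bool" where
  "simple_graph V adj \<longleftrightarrow> finite V \<and> (\<forall>u v. adj u v \<longrightarrow> u \<in> V \<and> v \<in> V)
     \<and> (\<forall>u v. adj u v \<longrightarrow> adj v u) \<and> (\<forall>u. \<not> adj u u)"

definition side_data :: "'a set \<Rightarrow> ('a \<Rightarrow> 'a \<Rightarrow> bool) \<Rightarrow> ('a \<Rightarrow> 'a set) \<Rightarrow> ('a \<Rightarrow> 'a set) \<Rightarrow> bool" where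
  "side_data V adj left right \<longleftrightarrow> (\<forall>u\<in>V. left u \<union> right u = {v\<in>V. nonadj adj u v}
      \<and> left u \<inter> right u = {})"

text \<open>A circular word is represented by a list (any rotation); letter u^0 is (u,False),
  u^1 is (u,True). cbetween w a b x: x lies strictly between a and b reading
  cyclically forward from a.\<close>
definition cbetween :: "'b list \<Rightarrow> 'b \<Rightarrow> 'b \<Rightarrow> 'b \<Rightarrow> bool" where
  "cbetween w a b x \<longleftrightarrow> (\<exists>i j k. i < length w \<and> j < length w \<and> k < length w \<and>
      w ! i = a \<and> w ! j = b \<and> w ! k = x \<and>
      (if i < j then i < k \<and> k < j else (i < k \<or> k < j)))"

definition conformal_model :: "'a set \<Rightarrow> ('a \<Rightarrow> 'a \<Rightarrow> bool) \<Rightarrow> ('a \<Rightarrow> 'a set) \<Rightarrow> ('a \<Rightarrow> 'a set)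
    \<Rightarrow> ('a \<times> bool) list \<Rightarrow> bool" where
  "conformal_model X adj left right w \<longleftrightarrow> distinct w \<and> set w = X \<times> UNIV \<and>
     (\<forall>u\<in>X. \<forall>v\<in>X. u \<noteq> v \<longrightarrow>
        ((cbetween w (u,False) (u,True) (v,False) \<noteq> cbetween w (u,False) (u,True) (v,True))
            \<longleftrightarrow> adj u v)
      \<and> (nonadj adj u v \<longrightarrow>
          ((cbetween w (u,False) (u,True) (v,False) \<and> cbetween w (u,False) (u,True) (v,True))
              \<longleftrightarrow> v \<in> left u)
        \<and> ((cbetween w (u,True) (u,False) (v,False) \<and> cbetween w (u,True) (u,False) (v,True))
              \<longleftrightarrow> v \<in> right u)))"

definition has_conformal_model :: "'a set \<Rightarrow> ('a \<Rightarrow> 'a \<Rightarrow> bool) \<Rightarrow> ('a \<Rightarrow> 'a set) \<Rightarrow> ('a \<Rightarrow> 'a set) \<Rightarrow> bool" where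
  "has_conformal_model X adj left right \<longleftrightarrow> (\<exists>w. conformal_model X adj left right w)"

definition is_module :: "'a set \<Rightarrow> ('a \<Rightarrow> 'a \<Rightarrow> bool) \<Rightarrow> 'a set \<Rightarrow> bool" where
  "is_module X adj M \<longleftrightarrow> M \<subseteq> X \<and>
     (\<forall>x\<in>X - M. (\<forall>m\<in>M. adj x m) \<or> (\<forall>m\<in>M. \<not> adj x m))"

definition trivial_module :: "'a set \<Rightarrow> 'a set \<Rightarrow> bool" where
  "trivial_module X M \<longleftrightarrow> card M \<le> 1 \<or> M = X"

definition prime_graph :: "'a set \<Rightarrow> ('a \<Rightarrow> 'a \<Rightarrow> bool) \<Rightarrow> bool" where
  "prime_graph X adj \<longleftrightarrow> (\<forall>M. is_module X adj M \<longrightarrow> trivial_module X M)"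

definition strong_module :: "'a set \<Rightarrow> ('a \<Rightarrow> 'a \<Rightarrow> bool) \<Rightarrow> 'a set \<Rightarrow> bool" where
  "strong_module X adj M \<longleftrightarrow> is_module X adj M \<and>
     (\<forall>N. is_module X adj N \<longrightarrow> M \<inter> N = {} \<or> M \<subseteq> N \<or> N \<subseteq> M)"

definition md_node :: "'a set \<Rightarrow> ('a \<Rightarrow> 'a \<Rightarrow> bool) \<Rightarrow> 'a set \<Rightarrow> bool" where
  "md_node V adj Q \<longleftrightarrow> strong_module V adj Q \<and> Q \<noteq> {}"

definition md_children :: "'a set \<Rightarrow> ('a \<Rightarrow> 'a \<Rightarrow> bool) \<Rightarrow> 'a set \<Rightarrow> 'a set set" where
  "md_children V adj Q = {M. md_node V adj M \<and> M \<subset> Q \<and>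
      \<not> (\<exists>N. strong_module V adj N \<and> M \<subset> N \<and> N \<subset> Q)}"

definition representatives :: "'a set set \<Rightarrow> 'a set \<Rightarrow> bool" where
  "representatives Ms U \<longleftrightarrow> U \<subseteq> \<Union>Ms \<and> (\<forall>M\<in>Ms. card (U \<inter> M) = 1)"

definition connected_graph :: "'a set \<Rightarrow> ('a \<Rightarrow> 'a \<Rightarrow> bool) \<Rightarrow> bool" where
  "connected_graph X r \<longleftrightarrow> X \<noteq> {} \<and>
     (\<forall>x\<in>X. \<forall>y\<in>X. (x, y) \<in> ({(a, b). a \<in> X \<and> b \<in> X \<and> r a b})\<^sup>*)"

definition complement_rel :: "('a \<Rightarrow> 'a \<Rightarrow> bool) \<Rightarrow> 'a \<Rightarrow> 'a \<Rightarrow> bool" where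
  "complement_rel adj = nonadj adj"

text \<open>Prime node: a node whose quotient (graph on one representative per child) is prime,
  and which is neither parallel nor serial (at least three children).\<close>
definition prime_node :: "'a set \<Rightarrow> ('a \<Rightarrow> 'a \<Rightarrow> bool) \<Rightarrow> 'a set \<Rightarrow> bool" where
  "prime_node V adj Q \<longleftrightarrow> md_node V adj Q \<and> card (md_children V adj Q) \<ge> 3 \<and>
     (\<exists>R. representatives (md_children V adj Q) R \<and> prime_graph R adj)"

definition parallel_module :: "('a \<Rightarrow> 'a \<Rightarrow> bool) \<Rightarrow> 'a set \<Rightarrow> bool" where
  "parallel_module adj M \<longleftrightarrow> \<not> connected_graph M adj"

definition serial_module :: "('a \<Rightarrow> 'a \<Rightarrow> bool) \<Rightarrow> 'a set \<Rightarrow> bool" where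
  "serial_module adj M \<longleftrightarrow> \<not> connected_graph M (complement_rel adj)"

end

theory Submission
  imports Defs
begin

text \<open>Read the conformal model as a chord diagram: vertex u is the chord joining the positions
  of u^0 and u^1, adjacency is crossing, and left(u), right(u) are the two sides of the chord of u.
  The core fact is that if two children M and N of Q have no edges between them, then all vertices
  of N separate the same pairs of vertices of M. Suppose u in N separates v, w in M but u' in N
  does not. Every chord crossing both v and w then crosses u. If some z in M separates u from u',
  then every chord crossing u and u' crosses z as well, so M and N have the same neighbours
  outside M and N, which primality of the quotient forbids. Otherwise take a neighbour x of M
  outside M, which exists by primality: x crosses u, u', v and w, and comparing where these four
  chords meet the arcs of x yields a contradiction. Both equivalences follow by replacing a vertex
  of Q - M by the representative in U of its child.\<close>

section \<open>Chords on a circle\<close>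

definition cyclic_between :: "nat \<Rightarrow> nat \<Rightarrow> nat \<Rightarrow> bool" where
  "cyclic_between i j k \<longleftrightarrow> (if i < j then i < k \<and> k < j else i < k \<or> k < j)"

text \<open>Renumbering a cycle of length L so that x gets number 0 preserves cyclic betweenness;
  this reduces statements about chords to the case where one endpoint is 0, where they become
  statements about the linear order.\<close>
definition rotate_pos :: "nat \<Rightarrow> nat \<Rightarrow> nat \<Rightarrow> nat" where
  "rotate_pos L x k = (if x \<le> k then k - x else k + L - x)"

lemma rotate_pos_eq_iff:
  "k < L \<Longrightarrow> k' < L \<Longrightarrow> x < L \<Longrightarrow> rotate_pos L x k = rotate_pos L x k' \<longleftrightarrow> k = k'"
  unfolding rotate_pos_def by (auto split: if_splits)

lemma rotate_pos_self: "rotate_pos L x x = 0"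
  unfolding rotate_pos_def by simp

lemma cyclic_between_rotate_pos:
  assumes "i < L" "j < L" "k < L" "x < L" "distinct [i, j, k]"
  shows "cyclic_between (rotate_pos L x i) (rotate_pos L x j) (rotate_pos L x k) = cyclic_between i j k"
  using assms unfolding cyclic_between_def rotate_pos_def by auto

lemma crossing_sym:
  assumes "distinct [a0, a1, b0, b1]"
  shows "(cyclic_between a0 a1 b0 \<noteq> cyclic_between a0 a1 b1) \<longleftrightarrow>
    (cyclic_between b0 b1 a0 \<noteq> cyclic_between b0 b1 a1)"
  using assms unfolding cyclic_between_def by auto

lemma noncrossing_if_separated_0:
  assumes "a0 = 0" "distinct [a0, a1, x0, x1, d0, d1]"
    and "cyclic_between a0 a1 x0 = cyclic_between a0 a1 x1"
    and "cyclic_between a0 a1 d0 = cyclic_between a0 a1 d1"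
    and "cyclic_between a0 a1 x0 \<noteq> cyclic_between a0 a1 d0"
  shows "cyclic_between x0 x1 d0 = cyclic_between x0 x1 d1"
  using assms unfolding cyclic_between_def by auto

lemma noncrossing_if_separated:
  assumes dist: "distinct [a0, a1, x0, x1, d0, d1]"
    and "cyclic_between a0 a1 x0 = cyclic_between a0 a1 x1"
    and "cyclic_between a0 a1 d0 = cyclic_between a0 a1 d1"
    and "cyclic_between a0 a1 x0 \<noteq> cyclic_between a0 a1 d0"
  shows "cyclic_between x0 x1 d0 = cyclic_between x0 x1 d1"
proof -
  obtain L where L: "\<forall>k\<in>set [a0, a1, x0, x1, d0, d1]. k < L"
    by (metis finite_set finite_nat_set_iff_bounded)
  let ?r = "rotate_pos L a0"
  have "?r a0 = 0" by (rule rotate_pos_self)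
  then have "cyclic_between (?r x0) (?r x1) (?r d0) = cyclic_between (?r x0) (?r x1) (?r d1)"
    by (rule noncrossing_if_separated_0[of "?r a0" "?r a1"])
      (use assms L in \<open>simp_all add: cyclic_between_rotate_pos rotate_pos_eq_iff\<close>)
  then show ?thesis using assms L by (simp add: cyclic_between_rotate_pos)
qed

lemma crossing_chord_0E:
  assumes "cyclic_between 0 e y0 \<noteq> cyclic_between 0 e y1" "distinct [0, e, y0, y1]"
  obtains f g where "f < e" "e < g" "y0 = f \<and> y1 = g \<or> y0 = g \<and> y1 = f"
  using assms unfolding cyclic_between_def by (cases "y0 < e") auto

lemma cyclic_between_feet:
  assumes "a0 = f \<and> a1 = g \<or> a0 = g \<and> a1 = f" "f < g" "k \<noteq> f" "k \<noteq> g"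
  shows "cyclic_between a0 a1 k \<longleftrightarrow> ((f < k \<and> k < g) \<longleftrightarrow> a0 = f)"
  using assms unfolding cyclic_between_def by auto

lemma noncrossing_side_by_feet:
  assumes a: "a0 = fa \<and> a1 = ga \<or> a0 = ga \<and> a1 = fa" "fa < e" "e < ga"
    and c: "c0 = fc \<and> c1 = gc \<or> c0 = gc \<and> c1 = fc" "fc < e"
    and "fc \<noteq> fa"
    and "cyclic_between a0 a1 c0 = cyclic_between a0 a1 c1"
  shows "cyclic_between a0 a1 c0 \<longleftrightarrow> ((fa < fc) \<longleftrightarrow> a0 = fa)"
proof -
  have "cyclic_between a0 a1 c0 = cyclic_between a0 a1 fc" using assms by auto
  also have "\<dots> \<longleftrightarrow> ((fa < fc \<and> fc < ga) \<longleftrightarrow> a0 = fa)"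
    by (rule cyclic_between_feet) (use assms in auto)
  finally show ?thesis using assms by auto
qed

text \<open>A chord crossing (0, e1) has exactly one endpoint, its foot, below e1. For two such
  chords that do not cross, which side of the one contains the other is decided by comparing
  their feet, so all hypotheses become comparisons between the feet of a, b, c and d.\<close>
lemma common_transversal_separation_0:
  assumes "e0 = 0" and dist: "distinct [e0, e1, a0, a1, b0, b1, c0, c1, d0, d1]"
    and ea: "cyclic_between e0 e1 a0 \<noteq> cyclic_between e0 e1 a1"
    and eb: "cyclic_between e0 e1 b0 \<noteq> cyclic_between e0 e1 b1"
    and ec: "cyclic_between e0 e1 c0 \<noteq> cyclic_between e0 e1 c1"
    and ed: "cyclic_between e0 e1 d0 \<noteq> cyclic_between e0 e1 d1"
    and ac: "cyclic_between a0 a1 c0 = cyclic_between a0 a1 c1"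
    and ad: "cyclic_between a0 a1 d0 = cyclic_between a0 a1 d1"
    and bc: "cyclic_between b0 b1 c0 = cyclic_between b0 b1 c1"
    and bd: "cyclic_between b0 b1 d0 = cyclic_between b0 b1 d1"
    and a_cd: "cyclic_between a0 a1 c0 \<noteq> cyclic_between a0 a1 d0"
    and c_ab: "cyclic_between c0 c1 a0 = cyclic_between c0 c1 b0"
    and d_ab: "cyclic_between d0 d1 a0 = cyclic_between d0 d1 b0"
  shows "cyclic_between b0 b1 c0 \<noteq> cyclic_between b0 b1 d0"
proof -
  have ca: "cyclic_between c0 c1 a0 = cyclic_between c0 c1 a1"
    and cb: "cyclic_between c0 c1 b0 = cyclic_between c0 c1 b1"
    and da: "cyclic_between d0 d1 a0 = cyclic_between d0 d1 a1"
    and db: "cyclic_between d0 d1 b0 = cyclic_between d0 d1 b1"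
    using crossing_sym[of a0 a1 c0 c1] crossing_sym[of b0 b1 c0 c1] crossing_sym[of a0 a1 d0 d1]
      crossing_sym[of b0 b1 d0 d1] ac ad bc bd dist by auto
  obtain fa ga where A: "fa < e1" "e1 < ga" "a0 = fa \<and> a1 = ga \<or> a0 = ga \<and> a1 = fa"
    using crossing_chord_0E[of e1 a0 a1] ea dist \<open>e0 = 0\<close> by auto
  obtain fb gb where B: "fb < e1" "e1 < gb" "b0 = fb \<and> b1 = gb \<or> b0 = gb \<and> b1 = fb"
    using crossing_chord_0E[of e1 b0 b1] eb dist \<open>e0 = 0\<close> by auto
  obtain fc gc where C: "fc < e1" "e1 < gc" "c0 = fc \<and> c1 = gc \<or> c0 = gc \<and> c1 = fc"
    using crossing_chord_0E[of e1 c0 c1] ec dist \<open>e0 = 0\<close> by auto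
  obtain fd gd where D: "fd < e1" "e1 < gd" "d0 = fd \<and> d1 = gd \<or> d0 = gd \<and> d1 = fd"
    using crossing_chord_0E[of e1 d0 d1] ed dist \<open>e0 = 0\<close> by auto
  have feet: "distinct [fa, fb, fc, fd]"
    using A(3) B(3) C(3) D(3) dist by auto
  have "(fa < fc) \<noteq> (fa < fd)"
    using noncrossing_side_by_feet[OF A(3,1,2) C(3,1) _ ac] noncrossing_side_by_feet[OF A(3,1,2) D(3,1) _ ad]
      a_cd feet by auto
  moreover have "(fc < fa) \<longleftrightarrow> (fc < fb)"
    using noncrossing_side_by_feet[OF C(3,1,2) A(3,1) _ ca] noncrossing_side_by_feet[OF C(3,1,2) B(3,1) _ cb]
      c_ab feet by auto
  moreover have "(fd < fa) \<longleftrightarrow> (fd < fb)"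
    using noncrossing_side_by_feet[OF D(3,1,2) A(3,1) _ da] noncrossing_side_by_feet[OF D(3,1,2) B(3,1) _ db]
      d_ab feet by auto
  ultimately have "(fb < fc) \<noteq> (fb < fd)"
    using feet by (cases "fc < fd") auto
  then show ?thesis
    using noncrossing_side_by_feet[OF B(3,1,2) C(3,1) _ bc] noncrossing_side_by_feet[OF B(3,1,2) D(3,1) _ bd]
      feet by auto
qed

lemma common_transversal_separation:
  assumes dist: "distinct [e0, e1, a0, a1, b0, b1, c0, c1, d0, d1]"
    and "cyclic_between e0 e1 a0 \<noteq> cyclic_between e0 e1 a1"
    and "cyclic_between e0 e1 b0 \<noteq> cyclic_between e0 e1 b1"
    and "cyclic_between e0 e1 c0 \<noteq> cyclic_between e0 e1 c1"
    and "cyclic_between e0 e1 d0 \<noteq> cyclic_between e0 e1 d1"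
    and "cyclic_between a0 a1 c0 = cyclic_between a0 a1 c1"
    and "cyclic_between a0 a1 d0 = cyclic_between a0 a1 d1"
    and "cyclic_between b0 b1 c0 = cyclic_between b0 b1 c1"
    and "cyclic_between b0 b1 d0 = cyclic_between b0 b1 d1"
    and "cyclic_between a0 a1 c0 \<noteq> cyclic_between a0 a1 d0"
    and "cyclic_between c0 c1 a0 = cyclic_between c0 c1 b0"
    and "cyclic_between d0 d1 a0 = cyclic_between d0 d1 b0"
  shows "cyclic_between b0 b1 c0 \<noteq> cyclic_between b0 b1 d0"
proof -
  obtain L where L: "\<forall>k\<in>set [e0, e1, a0, a1, b0, b1, c0, c1, d0, d1]. k < L"
    by (metis finite_set finite_nat_set_iff_bounded)
  have dist_rev: "distinct (rev [e0, e1, a0, a1, b0, b1, c0, c1, d0, d1])"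
    using dist by (simp only: distinct_rev)
  let ?r = "rotate_pos L e0"
  have "?r e0 = 0" by (rule rotate_pos_self)
  then have "cyclic_between (?r b0) (?r b1) (?r c0) \<noteq> cyclic_between (?r b0) (?r b1) (?r d0)"
    by (rule common_transversal_separation_0[of "?r e0" "?r e1" "?r a0" "?r a1" "?r b0" "?r b1"
          "?r c0" "?r c1" "?r d0" "?r d1"])
      (use assms dist_rev L in \<open>simp_all add: cyclic_between_rotate_pos rotate_pos_eq_iff\<close>)
  then show ?thesis using assms L by (simp add: cyclic_between_rotate_pos)
qed

lemma separated_crossing_chord:
  assumes dist: "distinct [s0, s1, p0, p1, q0, q1, x0, x1]"
    and "cyclic_between s0 s1 p0 = cyclic_between s0 s1 p1"
    and "cyclic_between s0 s1 q0 = cyclic_between s0 s1 q1"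
    and s_pq: "cyclic_between s0 s1 p0 \<noteq> cyclic_between s0 s1 q0"
    and xp: "cyclic_between x0 x1 p0 \<noteq> cyclic_between x0 x1 p1"
    and xq: "cyclic_between x0 x1 q0 \<noteq> cyclic_between x0 x1 q1"
  shows "cyclic_between s0 s1 x0 \<noteq> cyclic_between s0 s1 x1"
proof
  assume "cyclic_between s0 s1 x0 = cyclic_between s0 s1 x1"
  moreover have "cyclic_between s0 s1 x0 \<noteq> cyclic_between s0 s1 p0 \<or>
      cyclic_between s0 s1 x0 \<noteq> cyclic_between s0 s1 q0"
    using s_pq by blast
  ultimately show False
    using noncrossing_if_separated[of s0 s1 x0 x1 p0 p1] noncrossing_if_separated[of s0 s1 x0 x1 q0 q1]
      assms by auto
qed

section \<open>Conformal models as chord diagrams\<close>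

definition pos :: "'b list \<Rightarrow> 'b \<Rightarrow> nat" where
  "pos xs a = (THE i. i < length xs \<and> xs ! i = a)"

lemma pos_nth:
  assumes "distinct xs" "a \<in> set xs"
  shows "pos xs a < length xs" "xs ! pos xs a = a"
  using theI'[OF distinct_Ex1[OF assms]] unfolding pos_def by blast+

lemma pos_eq_iff:
  assumes "distinct xs" "a \<in> set xs" "b \<in> set xs"
  shows "pos xs a = pos xs b \<longleftrightarrow> a = b"
  using pos_nth[OF assms(1,2)] pos_nth[OF assms(1,3)] by metis

lemma pos_of_nth:
  assumes "distinct xs" "i < length xs"
  shows "pos xs (xs ! i) = i"
  using pos_nth[OF assms(1) nth_mem[OF assms(2)]] assms nth_eq_iff_index_eq by blast

lemma cbetween_iff_cyclic_between:
  assumes "distinct xs" "a \<in> set xs" "b \<in> set xs" "x \<in> set xs"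
  shows "cbetween xs a b x \<longleftrightarrow> cyclic_between (pos xs a) (pos xs b) (pos xs x)"
proof
  assume "cbetween xs a b x"
  then obtain i j k where "i < length xs" "j < length xs" "k < length xs"
      "xs ! i = a" "xs ! j = b" "xs ! k = x"
      "if i < j then i < k \<and> k < j else i < k \<or> k < j"
    unfolding cbetween_def by blast
  then show "cyclic_between (pos xs a) (pos xs b) (pos xs x)"
    using pos_of_nth[OF assms(1)] unfolding cyclic_between_def by metis
next
  assume "cyclic_between (pos xs a) (pos xs b) (pos xs x)"
  then show "cbetween xs a b x"
    using pos_nth[OF assms(1,2)] pos_nth[OF assms(1,3)] pos_nth[OF assms(1,4)]
    unfolding cbetween_def cyclic_between_def by blast
qed

locale chord_diagram =
  fixes V :: "'a set" and adj :: "'a \<Rightarrow> 'a \<Rightarrow> bool" and left right :: "'a \<Rightarrow> 'a set"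
    and word :: "('a \<times> bool) list"
  assumes sides: "side_data V adj left right"
    and model: "conformal_model V adj left right word"
begin

definition endpoint :: "'a \<Rightarrow> bool \<Rightarrow> nat" where
  "endpoint u b = pos word (u, b)"

abbreviation inside :: "'a \<Rightarrow> nat \<Rightarrow> bool" where
  "inside u k \<equiv> cyclic_between (endpoint u False) (endpoint u True) k"

text \<open>Meaningful only when neither v nor w is adjacent to u, so that each of their chords lies
  on one side of the chord of u.\<close>
definition separates :: "'a \<Rightarrow> 'a \<Rightarrow> 'a \<Rightarrow> bool" where
  "separates u v w \<longleftrightarrow> inside u (endpoint v False) \<noteq> inside u (endpoint w False)"

lemma endpoint_eq_iff:
  assumes "u \<in> V" "v \<in> V"
  shows "endpoint u b = endpoint v c \<longleftrightarrow> u = v \<and> b = c"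
  using model pos_eq_iff[of word "(u, b)" "(v, c)"] assms
  unfolding conformal_model_def endpoint_def by auto

lemma cbetween_iff_inside:
  assumes "u \<in> V" "v \<in> V"
  shows "cbetween word (u, False) (u, True) (v, b) \<longleftrightarrow> inside u (endpoint v b)"
  using model cbetween_iff_cyclic_between[of word] assms
  unfolding conformal_model_def endpoint_def by auto

lemma adj_iff_crossing:
  assumes "u \<in> V" "v \<in> V" "u \<noteq> v"
  shows "adj u v \<longleftrightarrow> inside u (endpoint v False) \<noteq> inside u (endpoint v True)"
  using model assms unfolding conformal_model_def by (simp add: cbetween_iff_inside)

lemma nonadj_noncrossing:
  assumes "u \<in> V" "v \<in> V" "u \<noteq> v" "\<not> adj u v"
  shows "inside u (endpoint v True) = inside u (endpoint v False)"
  using adj_iff_crossing assms by blast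

lemma left_iff_inside:
  assumes "u \<in> V" "v \<in> V" "nonadj adj u v"
  shows "v \<in> left u \<longleftrightarrow> inside u (endpoint v False)"
  using model assms nonadj_noncrossing[of u v]
  unfolding conformal_model_def nonadj_def by (auto simp: cbetween_iff_inside)

lemma left_right_partition:
  assumes "u \<in> V"
  shows "left u \<union> right u = {v\<in>V. nonadj adj u v}" "left u \<inter> right u = {}"
  using sides assms unfolding side_data_def by auto

lemma separates_iff_left:
  assumes "u \<in> V" "v \<in> V" "w \<in> V" "nonadj adj u v" "nonadj adj u w"
  shows "separates u v w \<longleftrightarrow> (v \<in> left u \<longleftrightarrow> w \<notin> left u)"
  using left_iff_inside[of u v] left_iff_inside[of u w] assms unfolding separates_def by auto

lemma same_side_iff_not_separates:
  assumes "u \<in> V" "v \<in> V" "w \<in> V" "nonadj adj u v" "nonadj adj u w"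
  shows "{v, w} \<subseteq> left u \<or> {v, w} \<subseteq> right u \<longleftrightarrow> \<not> separates u v w"
proof -
  have "v \<in> right u \<longleftrightarrow> v \<notin> left u" "w \<in> right u \<longleftrightarrow> w \<notin> left u"
    using left_right_partition assms by auto
  then show ?thesis
    using left_iff_inside[of u v] left_iff_inside[of u w] assms unfolding separates_def by auto
qed

lemma adj_to_separator:
  assumes V: "{s, p, q, x} \<subseteq> V" and dist: "distinct [s, p, q, x]"
    and "\<not> adj s p" "\<not> adj s q" "separates s p q" "adj x p" "adj x q"
  shows "adj s x"
proof -
  have "distinct [endpoint s False, endpoint s True, endpoint p False, endpoint p True,
      endpoint q False, endpoint q True, endpoint x False, endpoint x True]"
    using V dist by (simp add: endpoint_eq_iff)
  moreover have "inside s (endpoint p False) = inside s (endpoint p True)"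
    "inside s (endpoint q False) = inside s (endpoint q True)"
    using assms nonadj_noncrossing[of s p] nonadj_noncrossing[of s q] by auto
  moreover have "inside x (endpoint p False) \<noteq> inside x (endpoint p True)"
    "inside x (endpoint q False) \<noteq> inside x (endpoint q True)"
    using assms adj_iff_crossing[of x p] adj_iff_crossing[of x q] by auto
  ultimately have "inside s (endpoint x False) \<noteq> inside s (endpoint x True)"
    using separated_crossing_chord \<open>separates s p q\<close> unfolding separates_def by blast
  then show ?thesis
    using adj_iff_crossing[of s x] V dist by auto
qed

lemma separates_if_common_neighbour:
  assumes V: "{u, u', v, w, x} \<subseteq> V" and dist: "distinct [u, u', v, w, x]"
    and "\<not> adj u v" "\<not> adj u w" "\<not> adj u' v" "\<not> adj u' w"
    and separations: "separates u v w" "\<not> separates v u u'" "\<not> separates w u u'"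
    and "adj x u" "adj x u'" "adj x v" "adj x w"
  shows "separates u' v w"
proof -
  have crossing: "inside x (endpoint y False) \<noteq> inside x (endpoint y True)"
    if "y \<in> {u, u', v, w}" for y
    using that assms adj_iff_crossing[of x y] by auto
  have noncrossing: "inside y (endpoint z False) = inside y (endpoint z True)"
    if "y \<in> {u, u'}" "z \<in> {v, w}" for y z
    using that assms nonadj_noncrossing[of y z] by auto
  have "distinct [endpoint x False, endpoint x True, endpoint u False, endpoint u True,
      endpoint u' False, endpoint u' True, endpoint v False, endpoint v True,
      endpoint w False, endpoint w True]"
    using V dist by (auto simp: endpoint_eq_iff)
  then show ?thesis
    unfolding separates_def
    by (rule common_transversal_separation)
      (use crossing noncrossing separations in \<open>simp_all add: separates_def\<close>)
qed

end

section \<open>Children of a prime node\<close>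

lemma module_adj_uniform:
  assumes "is_module X adj K" "x \<in> X - K" "a \<in> K" "b \<in> K" "adj x a"
  shows "adj x b"
  using assms unfolding is_module_def by blast

lemma representativesE:
  assumes "representatives Ms U" "K \<in> Ms"
  obtains r where "U \<inter> K = {r}"
  using assms unfolding representatives_def by (meson card_1_singletonE)

locale prime_md_node =
  fixes V :: "'a set" and adj :: "'a \<Rightarrow> 'a \<Rightarrow> bool" and Q R :: "'a set"
  assumes simple: "simple_graph V adj"
    and node: "md_node V adj Q"
    and three_children: "card (md_children V adj Q) \<ge> 3"
    and reps: "representatives (md_children V adj Q) R"
    and prime: "prime_graph R adj"
begin

abbreviation children :: "'a set set" where
  "children \<equiv> md_children V adj Q"

lemma adj_sym: "adj u v \<Longrightarrow> adj v u"
  using simple unfolding simple_graph_def by blast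

lemma node_subset: "Q \<subseteq> V"
  using node unfolding md_node_def strong_module_def is_module_def by auto

lemma childD:
  assumes "K \<in> children"
  shows "strong_module V adj K" "K \<subset> Q"
    and "\<And>N. strong_module V adj N \<Longrightarrow> K \<subset> N \<Longrightarrow> \<not> N \<subset> Q"
  using assms unfolding md_children_def md_node_def by auto

lemma child_module: "K \<in> children \<Longrightarrow> is_module V adj K"
  using childD(1) unfolding strong_module_def by blast

lemma child_subset_V: "K \<in> children \<Longrightarrow> K \<subseteq> V"
  using childD(2) node_subset by blast

lemma children_disjoint:
  assumes K: "K \<in> children" and K': "K' \<in> children" and "K \<noteq> K'"
  shows "K \<inter> K' = {}"
proof -
  have "K \<inter> K' = {} \<or> K \<subseteq> K' \<or> K' \<subseteq> K"
    using childD(1)[OF K] child_module[OF K'] unfolding strong_module_def by blast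
  moreover have "\<not> K \<subset> K'" using childD(3)[OF K] childD(1,2)[OF K'] by blast
  moreover have "\<not> K' \<subset> K" using childD(3)[OF K'] childD(1,2)[OF K] by blast
  ultimately show ?thesis using \<open>K \<noteq> K'\<close> by blast
qed

lemma children_cover:
  assumes x: "x \<in> Q"
  obtains K where "K \<in> children" "x \<in> K"
proof -
  let ?F = "{N. strong_module V adj N \<and> x \<in> N \<and> N \<subset> Q}"
  have "finite ?F"
    by (rule finite_subset[of _ "Pow V"])
      (use simple in \<open>auto simp: simple_graph_def strong_module_def is_module_def\<close>)
  have "children \<noteq> {}" using three_children by auto
  then have "Q \<noteq> {x}" unfolding md_children_def md_node_def by auto
  moreover have "strong_module V adj {x}"
    using x node_subset unfolding strong_module_def is_module_def by auto
  ultimately have "{x} \<in> ?F" using x by auto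
  then obtain N where N: "N \<in> ?F" "\<forall>N'\<in>?F. N \<subseteq> N' \<longrightarrow> N = N'"
    using finite_has_maximal[OF \<open>finite ?F\<close>] by blast
  then have "N \<in> children" unfolding md_children_def md_node_def by auto
  with N(1) show ?thesis using that by blast
qed

lemma representatives_subset: "R \<subseteq> V"
  using reps child_subset_V unfolding representatives_def by blast

lemma finite_representatives: "finite R"
  using representatives_subset simple finite_subset unfolding simple_graph_def by blast

lemma three_representatives: "card R \<ge> 3"
proof -
  have "\<forall>K\<in>children. \<exists>r. R \<inter> K = {r}" using representativesE[OF reps] by metis
  then obtain r where r: "\<And>K. K \<in> children \<Longrightarrow> R \<inter> K = {r K}" by metis
  have "inj_on r children"
  proof (rule inj_onI)
    fix K K' assume "K \<in> children" "K' \<in> children" "r K = r K'"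
    then have "r K \<in> K \<inter> K'" using r by blast
    then show "K = K'" using children_disjoint \<open>K \<in> children\<close> \<open>K' \<in> children\<close> by blast
  qed
  moreover have "r ` children \<subseteq> R" using r by blast
  ultimately have "card children \<le> card R"
    using finite_representatives by (rule card_inj_on_le)
  then show ?thesis using three_children by simp
qed

lemma large_module_of_representatives:
  assumes "is_module R adj S" "card S \<ge> 2"
  shows "S = R"
  using prime assms unfolding prime_graph_def trivial_module_def by fastforce

lemma child_has_outside_neighbour:
  assumes M: "M \<in> children"
  shows "\<exists>x\<in>V - M. \<exists>m\<in>M. adj x m"
proof (rule ccontr)
  assume no_neighbour: "\<not> ?thesis"
  obtain r where r: "R \<inter> M = {r}" using representativesE[OF reps M] by blast
  have "\<not> adj r y" if y: "y \<in> R - {r}" for y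
  proof
    assume "adj r y"
    have "y \<in> V - M"
      using y r representatives_subset by blast
    then show False using r \<open>adj r y\<close> adj_sym no_neighbour by blast
  qed
  then have "is_module R adj (R - {r})" unfolding is_module_def by blast
  moreover have "card (R - {r}) \<ge> 2"
  proof -
    have "r \<in> R" using r by blast
    then show ?thesis using three_representatives finite_representatives by simp
  qed
  ultimately have "R - {r} = R" by (rule large_module_of_representatives)
  then show False using r by blast
qed

lemma child_adj_iff:
  assumes "K \<in> children" "y \<in> V - K" "r \<in> K"
  shows "adj y r \<longleftrightarrow> (\<exists>m\<in>K. adj y m)"
  using module_adj_uniform[OF child_module] assms by blast

lemma children_distinguished:
  assumes M: "M \<in> children" and N: "N \<in> children" and "M \<noteq> N"
  shows "\<exists>x\<in>V - (M \<union> N). (\<exists>m\<in>M. adj x m) \<noteq> (\<exists>n\<in>N. adj x n)"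
proof (rule ccontr)
  assume twins: "\<not> ?thesis"
  obtain rM where rM: "R \<inter> M = {rM}" using representativesE[OF reps M] by blast
  obtain rN where rN: "R \<inter> N = {rN}" using representativesE[OF reps N] by blast
  have "rM \<noteq> rN" using rM rN children_disjoint[OF M N \<open>M \<noteq> N\<close>] by blast
  have "adj y rM \<longleftrightarrow> adj y rN" if y: "y \<in> R - {rM, rN}" for y
  proof -
    have "y \<in> V - (M \<union> N)" using y rM rN representatives_subset by blast
    then show ?thesis
      using child_adj_iff[OF M, of y rM] child_adj_iff[OF N, of y rN] twins rM rN by blast
  qed
  then have "is_module R adj {rM, rN}"
    using rM rN unfolding is_module_def by blast
  then have "{rM, rN} = R"
    using large_module_of_representatives \<open>rM \<noteq> rN\<close> by simp
  then show False using three_representatives \<open>rM \<noteq> rN\<close> by auto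
qed

lemma child_nonadj_iff:
  assumes "M \<in> children" "v \<in> M" "z \<in> V - M"
  shows "nonadj adj v z \<longleftrightarrow> (\<forall>m\<in>M. nonadj adj z m)"
  using child_adj_iff[of M z] assms adj_sym unfolding nonadj_def by blast

lemma nonadjacent_child_representativeE:
  assumes U: "representatives children U" and M: "M \<in> children"
    and z: "z \<in> Q - M" "\<forall>m\<in>M. nonadj adj z m"
  obtains K u where "K \<in> children" "K \<noteq> M" "z \<in> K" "u \<in> K" "u \<in> U - M"
    "\<forall>m\<in>M. nonadj adj u m" "\<forall>k\<in>K. \<forall>m\<in>M. \<not> adj k m"
proof -
  obtain K where K: "K \<in> children" "z \<in> K" using children_cover z(1) by blast
  have "K \<noteq> M" using K(2) z(1) by blast
  obtain u where u: "U \<inter> K = {u}" using representativesE[OF U K(1)] by blast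
  have "u \<notin> M" using children_disjoint[OF K(1) M \<open>K \<noteq> M\<close>] u by blast
  have no_edges: "\<forall>k\<in>K. \<forall>m\<in>M. \<not> adj k m"
  proof (intro ballI)
    fix k m assume "k \<in> K" "m \<in> M"
    have "m \<in> V - K" using \<open>m \<in> M\<close> children_disjoint[OF K(1) M \<open>K \<noteq> M\<close>] child_subset_V M by blast
    then have "\<not> adj m k" using child_adj_iff[OF K(1), of m z] K(2) \<open>k \<in> K\<close> z(2) \<open>m \<in> M\<close> adj_sym
      unfolding nonadj_def by blast
    then show "\<not> adj k m" using adj_sym by blast
  qed
  moreover have "\<forall>m\<in>M. nonadj adj u m"
    using no_edges u \<open>u \<notin> M\<close> unfolding nonadj_def by blast
  ultimately show ?thesis using that K \<open>K \<noteq> M\<close> u \<open>u \<notin> M\<close> by blast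
qed

end

section \<open>Children without edges between them\<close>

lemma uniform_iff_uniform_on_subset:
  assumes "B \<subseteq> A" "\<forall>a\<in>A. \<exists>b\<in>B. P a \<longleftrightarrow> P b"
  shows "(\<forall>a\<in>A. P a) \<or> (\<forall>a\<in>A. \<not> P a) \<longleftrightarrow> (\<forall>b\<in>B. P b) \<or> (\<forall>b\<in>B. \<not> P b)"
  using assms by blast

lemma doubleton_Int_eq_iff:
  assumes "(A \<union> B) \<inter> S = Z \<inter> S" "A \<inter> B = {}" "(C \<union> D) \<inter> S = Z \<inter> S" "C \<inter> D = {}"
  shows "{A \<inter> S, B \<inter> S} = {C \<inter> S, D \<inter> S} \<longleftrightarrow>
    (\<forall>z\<in>Z \<inter> S. z \<in> A \<longleftrightarrow> z \<in> C) \<or> (\<forall>z\<in>Z \<inter> S. \<not> (z \<in> A \<longleftrightarrow> z \<in> C))"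
proof -
  have "A \<inter> S = C \<inter> S \<and> B \<inter> S = D \<inter> S \<longleftrightarrow> (\<forall>z\<in>Z \<inter> S. z \<in> A \<longleftrightarrow> z \<in> C)"
    using assms by blast
  moreover have "A \<inter> S = D \<inter> S \<and> B \<inter> S = C \<inter> S \<longleftrightarrow> (\<forall>z\<in>Z \<inter> S. \<not> (z \<in> A \<longleftrightarrow> z \<in> C))"
    using assms by blast
  ultimately show ?thesis unfolding doubleton_eq_iff by blast
qed

locale conformal_prime_node =
  chord_diagram V adj left right word + prime_md_node V adj Q R
  for V :: "'a set" and adj left right word Q R
begin

lemma adj_separator_in_nonadjacent_child:
  assumes M: "M \<in> children" and N: "N \<in> children" and "M \<noteq> N"
    and no_edges: "\<forall>m\<in>M. \<forall>n\<in>N. \<not> adj m n"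
    and "u \<in> N" "v \<in> M" "w \<in> M" "separates u v w"
    and x: "x \<in> V - M" "adj x v" "adj x w"
  shows "adj x u"
proof -
  have "v \<noteq> w" using \<open>separates u v w\<close> by (auto simp: separates_def)
  have "u \<notin> M" using children_disjoint[OF M N \<open>M \<noteq> N\<close>] \<open>u \<in> N\<close> by blast
  have "x \<notin> N" using no_edges x \<open>v \<in> M\<close> adj_sym by blast
  then have "distinct [u, v, w, x]" using x \<open>u \<in> N\<close> \<open>u \<notin> M\<close> \<open>v \<noteq> w\<close> assms(6,7) by auto
  moreover have "{u, v, w, x} \<subseteq> V" using assms(5-7) x M N child_subset_V by blast
  moreover have "\<not> adj u v" "\<not> adj u w" using no_edges assms(5-7) adj_sym by blast+
  ultimately have "adj u x" using adj_to_separator \<open>separates u v w\<close> x(2,3) by blast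
  then show ?thesis using adj_sym by blast
qed

lemma no_mutual_separation:
  assumes M: "M \<in> children" and N: "N \<in> children" and "M \<noteq> N"
    and no_edges: "\<forall>m\<in>M. \<forall>n\<in>N. \<not> adj m n"
    and "u \<in> N" "v \<in> M" "w \<in> M" "separates u v w"
    and "z \<in> M" "u' \<in> N" "u'' \<in> N"
  shows "\<not> separates z u' u''"
proof
  assume "separates z u' u''"
  have no_edges': "\<forall>n\<in>N. \<forall>m\<in>M. \<not> adj n m" using no_edges adj_sym by blast
  have "(\<exists>m\<in>M. adj x m) \<longleftrightarrow> (\<exists>n\<in>N. adj x n)" if x: "x \<in> V - (M \<union> N)" for x
  proof
    assume "\<exists>m\<in>M. adj x m"
    then have "adj x v" "adj x w" using child_adj_iff[OF M, of x] x assms(6,7) by blast+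
    then have "adj x u" using adj_separator_in_nonadjacent_child assms(1-8) x by blast
    then show "\<exists>n\<in>N. adj x n" using \<open>u \<in> N\<close> by blast
  next
    assume "\<exists>n\<in>N. adj x n"
    then have "adj x u'" "adj x u''" using child_adj_iff[OF N, of x] x assms(10,11) by blast+
    then have "adj x z"
      using adj_separator_in_nonadjacent_child[OF N M \<open>M \<noteq> N\<close>[symmetric] no_edges']
        \<open>z \<in> M\<close> assms(10,11) \<open>separates z u' u''\<close> x by blast
    then show "\<exists>m\<in>M. adj x m" using \<open>z \<in> M\<close> by blast
  qed
  then show False using children_distinguished[OF M N \<open>M \<noteq> N\<close>] by blast
qed

lemma separates_if_nonadjacent_children:
  assumes M: "M \<in> children" and N: "N \<in> children" and "M \<noteq> N"
    and no_edges: "\<forall>m\<in>M. \<forall>n\<in>N. \<not> adj m n"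
    and u: "u \<in> N" "u' \<in> N" and v: "v \<in> M" "w \<in> M"
    and "separates u v w"
  shows "separates u' v w"
proof (rule ccontr)
  assume "\<not> separates u' v w"
  then have "u \<noteq> u'" "v \<noteq> w" using \<open>separates u v w\<close> by (auto simp: separates_def)
  obtain x m where x: "x \<in> V - M" "m \<in> M" "adj x m"
    using child_has_outside_neighbour[OF M] by blast
  have "adj x v" "adj x w" using child_adj_iff[OF M, of x] x v by blast+
  moreover have "adj x u"
    using adj_separator_in_nonadjacent_child assms \<open>adj x v\<close> \<open>adj x w\<close> x(1) by blast
  moreover have "x \<notin> N" using no_edges x adj_sym by blast
  moreover have "adj x u'" using child_adj_iff[OF N, of x] x u \<open>adj x u\<close> \<open>x \<notin> N\<close> by blast
  moreover have "\<not> separates v u u'" "\<not> separates w u u'"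
    using no_mutual_separation assms by blast+
  moreover have "distinct [u, u', v, w, x]"
    using children_disjoint[OF M N \<open>M \<noteq> N\<close>] u v x \<open>x \<notin> N\<close> \<open>u \<noteq> u'\<close> \<open>v \<noteq> w\<close> by auto
  moreover have "{u, u', v, w, x} \<subseteq> V" using u v x M N child_subset_V by blast
  moreover have "\<not> adj u v" "\<not> adj u w" "\<not> adj u' v" "\<not> adj u' w"
    using no_edges u v adj_sym by blast+
  ultimately have "separates u' v w"
    using separates_if_common_neighbour \<open>separates u v w\<close> by blast
  then show False using \<open>\<not> separates u' v w\<close> by blast
qed

lemma separates_iff_nonadjacent_children:
  assumes "M \<in> children" "N \<in> children" "M \<noteq> N" "\<forall>m\<in>M. \<forall>n\<in>N. \<not> adj m n"
    and "u \<in> N" "u' \<in> N" "v \<in> M" "w \<in> M"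
  shows "separates u v w \<longleftrightarrow> separates u' v w"
  using separates_if_nonadjacent_children[OF assms(1-4)] assms(5-8) by blast

lemma same_side_on_representatives:
  assumes U: "representatives children U" and M: "M \<in> children" and v: "v \<in> M" "w \<in> M"
  shows "(\<forall>u\<in>Q - M. (\<forall>m\<in>M. nonadj adj u m) \<longrightarrow> {v, w} \<subseteq> left u \<or> {v, w} \<subseteq> right u)
    \<longleftrightarrow> (\<forall>u\<in>U - M. (\<forall>m\<in>M. nonadj adj u m) \<longrightarrow> {v, w} \<subseteq> left u \<or> {v, w} \<subseteq> right u)"
    (is "(\<forall>u\<in>Q - M. ?nonadj u \<longrightarrow> ?same u) \<longleftrightarrow> (\<forall>u\<in>U - M. ?nonadj u \<longrightarrow> ?same u)")
proof
  have "U \<subseteq> Q" using U childD(2) unfolding representatives_def by blast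
  then show "\<forall>u\<in>Q - M. ?nonadj u \<longrightarrow> ?same u \<Longrightarrow> \<forall>u\<in>U - M. ?nonadj u \<longrightarrow> ?same u"
    by blast
next
  assume on_U: "\<forall>u\<in>U - M. ?nonadj u \<longrightarrow> ?same u"
  show "\<forall>u\<in>Q - M. ?nonadj u \<longrightarrow> ?same u"
  proof (intro ballI impI)
    fix u assume u: "u \<in> Q - M" "\<forall>m\<in>M. nonadj adj u m"
    obtain K u' where K: "K \<in> children" "K \<noteq> M" "u \<in> K" "u' \<in> K" "u' \<in> U - M"
        "\<forall>m\<in>M. nonadj adj u' m" "\<forall>k\<in>K. \<forall>m\<in>M. \<not> adj k m"
      using nonadjacent_child_representativeE[OF U M u] by blast
    have "{u, u', v, w} \<subseteq> V" using K(1,3,4) M v child_subset_V by blast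
    then have "?same u \<longleftrightarrow> \<not> separates u v w" "?same u' \<longleftrightarrow> \<not> separates u' v w"
      using same_side_iff_not_separates u(2) K(6) v by auto
    moreover have "separates u v w \<longleftrightarrow> separates u' v w"
      using separates_iff_nonadjacent_children[OF M K(1) K(2)[symmetric]] K(3,4,7) v adj_sym
      by blast
    ultimately show "?same u" using on_U K(5,6) by blast
  qed
qed

lemma side_partition_on_representatives:
  assumes U: "representatives children U" and M: "M \<in> children" and v: "v \<in> M" "w \<in> M"
  shows "{left v \<inter> (Q - M), right v \<inter> (Q - M)} = {left w \<inter> (Q - M), right w \<inter> (Q - M)}
    \<longleftrightarrow> {left v \<inter> (U - M), right v \<inter> (U - M)} = {left w \<inter> (U - M), right w \<inter> (U - M)}"
proof -
  define Z where "Z = {z. \<forall>m\<in>M. nonadj adj z m}"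
  have vw_V: "v \<in> V" "w \<in> V" using v M child_subset_V by blast+
  have nonadj_iff: "nonadj adj y z \<longleftrightarrow> z \<in> Z" if "y \<in> {v, w}" "z \<in> V - M" for y z
    using child_nonadj_iff[OF M, of y z] that v unfolding Z_def by auto
  have partition: "{left v \<inter> S, right v \<inter> S} = {left w \<inter> S, right w \<inter> S} \<longleftrightarrow>
      (\<forall>z\<in>Z \<inter> S. z \<in> left v \<longleftrightarrow> z \<in> left w) \<or>
      (\<forall>z\<in>Z \<inter> S. \<not> (z \<in> left v \<longleftrightarrow> z \<in> left w))"
    if S: "S \<subseteq> V - M" for S
    by (rule doubleton_Int_eq_iff)
      (use left_right_partition[OF vw_V(1)] left_right_partition[OF vw_V(2)] nonadj_iff S in auto)
  have transfer: "\<exists>u\<in>Z \<inter> (U - M). (z \<in> left v \<longleftrightarrow> z \<in> left w) \<longleftrightarrow> (u \<in> left v \<longleftrightarrow> u \<in> left w)"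
    if z: "z \<in> Z \<inter> (Q - M)" for z
  proof -
    have z': "z \<in> Q - M" "\<forall>m\<in>M. nonadj adj z m" using z unfolding Z_def by auto
    then obtain K u where K: "K \<in> children" "K \<noteq> M" "z \<in> K" "u \<in> K" "u \<in> U - M"
        "\<forall>m\<in>M. nonadj adj u m" "\<forall>k\<in>K. \<forall>m\<in>M. \<not> adj k m"
      by (rule nonadjacent_child_representativeE[OF U M])
    have zu_V: "z \<in> V - M" "u \<in> V - M" using z'(1) K(1,3,4,5) child_subset_V by blast+
    have "u \<in> Z" using K(6) unfolding Z_def by blast
    have "separates y z u \<longleftrightarrow> (z \<in> left y \<longleftrightarrow> u \<notin> left y)" if "y \<in> {v, w}" for y
    proof (rule separates_iff_left)
      show "y \<in> V" "z \<in> V" "u \<in> V" using that vw_V zu_V by auto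
      show "nonadj adj y z" "nonadj adj y u" using nonadj_iff[OF that] zu_V z \<open>u \<in> Z\<close> by auto
    qed
    moreover have "separates v z u \<longleftrightarrow> separates w z u"
      using separates_iff_nonadjacent_children[OF K(1) M K(2) K(7)] K(3,4) v by blast
    moreover have "u \<in> Z \<inter> (U - M)" using K(5,6) unfolding Z_def by blast
    ultimately show ?thesis by blast
  qed
  have UM: "U - M \<subseteq> Q - M" using U childD(2) unfolding representatives_def by blast
  have QM: "Q - M \<subseteq> V - M" using node_subset by blast
  have UV: "U - M \<subseteq> V - M" using UM QM by blast
  show ?thesis
    unfolding partition[OF QM] partition[OF UV]
    by (rule uniform_iff_uniform_on_subset) (use UM transfer in blast)+
qed

end

theorem mainTheorem2:
  fixes V :: "'a set" and adj :: "'a \<Rightarrow> 'a \<Rightarrow> bool"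
    and left right :: "'a \<Rightarrow> 'a set" and Q U M :: "'a set" and v w :: 'a
  assumes "simple_graph V adj"
    and "side_data V adj left right"
    and "has_conformal_model V adj left right"
    and "prime_node V adj Q"
    and "U \<subseteq> Q" and "representatives (md_children V adj Q) U"
    and "M \<in> md_children V adj Q" and "v \<in> M" and "w \<in> M"
  shows "(parallel_module adj M \<longrightarrow>
           ((\<forall>u\<in>Q - M. (\<forall>m\<in>M. nonadj adj u m) \<longrightarrow>
               ({v, w} \<subseteq> left u \<or> {v, w} \<subseteq> right u))
        \<longleftrightarrow> (\<forall>u\<in>U - M. (\<forall>m\<in>M. nonadj adj u m) \<longrightarrow>
               ({v, w} \<subseteq> left u \<or> {v, w} \<subseteq> right u))))
       \<and> (serial_module adj M \<longrightarrow>
           ({left v \<inter> (Q - M), right v \<inter> (Q - M)} = {left w \<inter> (Q - M), right w \<inter> (Q - M)}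
        \<longleftrightarrow> {left v \<inter> (U - M), right v \<inter> (U - M)} = {left w \<inter> (U - M), right w \<inter> (U - M)}))"
proof -
  obtain word where "conformal_model V adj left right word"
    using assms(3) unfolding has_conformal_model_def by blast
  moreover obtain R where "md_node V adj Q" "card (md_children V adj Q) \<ge> 3"
      "representatives (md_children V adj Q) R" "prime_graph R adj"
    using assms(4) unfolding prime_node_def by blast
  ultimately interpret conformal_prime_node V adj left right word Q R
    using assms(1,2) by unfold_locales auto
  show ?thesis
    using same_side_on_representatives[OF assms(6-9)] side_partition_on_representatives[OF assms(6-9)]
    by blast
qed

end
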